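(* Let $a>b>0$ and let $E$ be the ellipse $\frac{x^2}{a^2}+\frac{y^2}{b^2}=1$. For a 3-periodic billiard orbit $T$ in $E$, let $r,R$ be the inradius and circumradius of $T$, let $A'$ be the area of the excentral triangle of $T$ and $A''$ the area of the extouch triangle of $T$. Then $A'/A''=(2R/r)^2$, and this ratio is the same for all 3-periodic orbits in $E$.
   Context: A 3-periodic billiard orbit in the ellipse $E$ is a nondegenerate triangle $P_1P_2P_3$ with all vertices on $E$ such that at each vertex $P_i$ the normal line to $E$ at $P_i$ bisects the interior angle of the triangle at $P_i$. The excentral triangle has vertices at the three excenters of $T$. The extouch triangle has as vertices the three points where each excircle of $T$ touches the corresponding side (segment) of $T$. *)

theory Defs
  imports "HOL-Analysis.Analysis"
begin

type_synonym pt = "real \<times> real"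

definition on_ellipse :: "real \<Rightarrow> real \<Rightarrow> pt \<Rightarrow> bool" where
  "on_ellipse a b P \<longleftrightarrow> (fst P)^2 / a^2 + (snd P)^2 / b^2 = 1"

definition cross2 :: "pt \<Rightarrow> pt \<Rightarrow> real" where
  "cross2 u v = fst u * snd v - snd u * fst v"

definition ellipse_normal :: "real \<Rightarrow> real \<Rightarrow> pt \<Rightarrow> pt" where
  "ellipse_normal a b P = (fst P / a^2, snd P / b^2)"

definition int_bisector_dir :: "pt \<Rightarrow> pt \<Rightarrow> pt \<Rightarrow> pt" where
  "int_bisector_dir P Q R = (1 / dist Q P) *\<^sub>R (Q - P) + (1 / dist R P) *\<^sub>R (R - P)"

definition normal_bisects :: "real \<Rightarrow> real \<Rightarrow> pt \<Rightarrow> pt \<Rightarrow> pt \<Rightarrow> bool" where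
  "normal_bisects a b P Q R \<longleftrightarrow> cross2 (ellipse_normal a b P) (int_bisector_dir P Q R) = 0"

definition billiard3 :: "real \<Rightarrow> real \<Rightarrow> pt \<Rightarrow> pt \<Rightarrow> pt \<Rightarrow> bool" where
  "billiard3 a b P1 P2 P3 \<longleftrightarrow>
     \<not> collinear {P1, P2, P3} \<and>
     on_ellipse a b P1 \<and> on_ellipse a b P2 \<and> on_ellipse a b P3 \<and>
     normal_bisects a b P1 P2 P3 \<and> normal_bisects a b P2 P3 P1 \<and> normal_bisects a b P3 P1 P2"

definition tri_area :: "pt \<Rightarrow> pt \<Rightarrow> pt \<Rightarrow> real" where
  "tri_area A B C = \<bar>cross2 (B - A) (C - A)\<bar> / 2"

definition circumradius :: "pt \<Rightarrow> pt \<Rightarrow> pt \<Rightarrow> real" where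
  "circumradius A B C = (THE R. \<exists>Z. dist Z A = R \<and> dist Z B = R \<and> dist Z C = R)"

definition incenter :: "pt \<Rightarrow> pt \<Rightarrow> pt \<Rightarrow> pt" where
  "incenter A B C =
     (1 / (dist B C + dist A C + dist A B)) *\<^sub>R
       (dist B C *\<^sub>R A + dist A C *\<^sub>R B + dist A B *\<^sub>R C)"

definition inradius :: "pt \<Rightarrow> pt \<Rightarrow> pt \<Rightarrow> real" where
  "inradius A B C = infdist (incenter A B C) (affine hull {B, C})"

text \<open>Excenter opposite vertex A (centre of the excircle tangent to side BC).\<close>
definition excenter :: "pt \<Rightarrow> pt \<Rightarrow> pt \<Rightarrow> pt" where
  "excenter A B C =
     (1 / (- dist B C + dist A C + dist A B)) *\<^sub>R
       (- (dist B C *\<^sub>R A) + dist A C *\<^sub>R B + dist A B *\<^sub>R C)"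

definition foot :: "pt \<Rightarrow> pt \<Rightarrow> pt \<Rightarrow> pt" where
  "foot X B C = B + (((X - B) \<bullet> (C - B)) / (norm (C - B))^2) *\<^sub>R (C - B)"

text \<open>Extouch point on side BC: where the excircle opposite A touches BC
  (foot of the perpendicular from the excenter to BC).\<close>
definition extouch_pt :: "pt \<Rightarrow> pt \<Rightarrow> pt \<Rightarrow> pt" where
  "extouch_pt A B C = foot (excenter A B C) B C"

definition excentral_area :: "pt \<Rightarrow> pt \<Rightarrow> pt \<Rightarrow> real" where
  "excentral_area A B C = tri_area (excenter A B C) (excenter B C A) (excenter C A B)"

definition extouch_area :: "pt \<Rightarrow> pt \<Rightarrow> pt \<Rightarrow> real" where
  "extouch_area A B C = tri_area (extouch_pt A B C) (extouch_pt B C A) (extouch_pt C A B)"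

end

theory Submission
  imports Defs
begin

(* For a triangle with side lengths a, b, c put N = (-a+b+c)(a-b+c)(a+b-c). In barycentric
   coordinates the excentral triangle has 4abc/N times the signed area of the triangle and the
   extouch triangle N/(4abc) times it, while R = abc/(2|D|), r = |D|/(a+b+c) (D twice the signed
   area) and Heron's formula 4 D^2 = (a+b+c) N give r/R = N/(2abc). Hence A'/A'' = (2R/r)^2 for
   every triangle.

   For a 3-periodic orbit, the reflection law at a vertex P says that the distances of the other
   two vertices from the tangent at P are proportional to their distances from P. Going around
   the triangle, 1 - cos(t_i - t_j) = J |P_i P_j| for the eccentric angles t_i of the vertices and
   one constant J > 0. Squaring turns this into a symmetric bilinear relation between the two
   endpoints of every side, and three points of the circle satisfying it pairwise force a closure
   condition: a quadratic equation for J^2 with a single positive root. The same relations give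
   N = 2 (J^2 (a^2+b^2) - 1) abc, so r/R, and with it A'/A'', depends on a and b only. *)

lemma dist_power2: "(dist P Q)^2 = (fst P - fst Q)^2 + (snd P - snd Q)^2"
  by (cases P; cases Q) (simp add: dist_Pair_Pair dist_real_def)

lemma collinear_if_cross2_eq_0:
  assumes "cross2 (B - A) (C - A) = 0"
  shows "collinear {A, B, C}"
proof -
  define u v where "u = B - A" and "v = C - A"
  have "collinear {0, u, v}"
  proof (cases "u = 0")
    case False
    then have "v = inverse (u \<bullet> u) *\<^sub>R ((u \<bullet> u) *\<^sub>R v)"
      by simp
    also have "(u \<bullet> u) *\<^sub>R v = (u \<bullet> v) *\<^sub>R u"
      using assms unfolding u_def v_def
      by (simp add: prod_eq_iff inner_prod_def cross2_def algebra_simps) algebra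
    finally show ?thesis
      by (auto simp: collinear_lemma)
  qed simp
  then show ?thesis
    using collinear_3[of B A C] by (simp add: u_def v_def insert_commute)
qed

lemma heron_cross2:
  fixes A B C :: pt
  defines "a \<equiv> dist B C" and "b \<equiv> dist A C" and "c \<equiv> dist A B"
  shows "4 * (cross2 (B - A) (C - A))^2 = (a + b + c) * ((-a + b + c) * (a - b + c) * (a + b - c))"
proof -
  have "a^2 = (fst B - fst C)^2 + (snd B - snd C)^2"
    "b^2 = (fst A - fst C)^2 + (snd A - snd C)^2"
    "c^2 = (fst A - fst B)^2 + (snd A - snd B)^2"
    unfolding a_def b_def c_def by (rule dist_power2)+
  then show ?thesis by (simp add: cross2_def) algebra
qed

lemma noncollinear_sides_pos:
  assumes "\<not> collinear {A, B, C}"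
  shows "dist B C > 0" "dist A C > 0" "dist A B > 0"
  using assms by (auto simp: insert_commute)

lemma noncollinear_excess_product_pos:
  fixes A B C :: pt
  assumes "\<not> collinear {A, B, C}"
  defines "a \<equiv> dist B C" and "b \<equiv> dist A C" and "c \<equiv> dist A B"
  shows "(-a + b + c) * (a - b + c) * (a + b - c) > 0"
proof -
  have "(a + b + c) * ((-a + b + c) * (a - b + c) * (a + b - c)) = 4 * (cross2 (B - A) (C - A))^2"
    unfolding a_def b_def c_def by (rule heron_cross2[symmetric])
  also have "\<dots> > 0"
    using assms(1) collinear_if_cross2_eq_0 by fastforce
  finally have "(a + b + c) * ((-a + b + c) * (a - b + c) * (a + b - c)) > 0" .
  moreover have "a + b + c > 0"
    using noncollinear_sides_pos[OF assms(1)] unfolding a_def b_def c_def by linarith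
  ultimately show ?thesis
    by (simp add: zero_less_mult_iff)
qed

lemma cross2_barycentric:
  fixes A B C :: pt
  assumes "u1 + v1 + w1 = 1" "u2 + v2 + w2 = 1" "u3 + v3 + w3 = 1"
  shows "cross2 ((u2 *\<^sub>R A + v2 *\<^sub>R B + w2 *\<^sub>R C) - (u1 *\<^sub>R A + v1 *\<^sub>R B + w1 *\<^sub>R C))
                ((u3 *\<^sub>R A + v3 *\<^sub>R B + w3 *\<^sub>R C) - (u1 *\<^sub>R A + v1 *\<^sub>R B + w1 *\<^sub>R C))
    = (u1 * (v2 * w3 - v3 * w2) - v1 * (u2 * w3 - u3 * w2) + w1 * (u2 * v3 - u3 * v2))
      * cross2 (B - A) (C - A)"
  using assms by (simp add: cross2_def) algebra

lemma excenter_barycentric: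
  "excenter A B C
    = (- dist B C / (- dist B C + dist A C + dist A B)) *\<^sub>R A
      + (dist A C / (- dist B C + dist A C + dist A B)) *\<^sub>R B
      + (dist A B / (- dist B C + dist A C + dist A B)) *\<^sub>R C"
  by (simp add: excenter_def scaleR_add_right scaleR_diff_right)

lemma cross2_excentral:
  fixes A B C :: pt
  assumes "\<not> collinear {A, B, C}"
  defines "a \<equiv> dist B C" and "b \<equiv> dist A C" and "c \<equiv> dist A B"
  shows "cross2 (excenter B C A - excenter A B C) (excenter C A B - excenter A B C)
    = 4 * a * b * c / ((-a + b + c) * (a - b + c) * (a + b - c)) * cross2 (B - A) (C - A)"
proof -
  define p q r where "p = -a + b + c" and "q = a - b + c" and "r = a + b - c"
  have nz: "p \<noteq> 0" "q \<noteq> 0" "r \<noteq> 0"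
    using noncollinear_excess_product_pos[OF assms(1)] unfolding p_def q_def r_def a_def b_def c_def
    by auto
  have sides: "dist C A = b" "dist B A = c" "dist C B = a"
    by (simp_all add: a_def b_def c_def dist_commute)
  have "excenter A B C = (-a / p) *\<^sub>R A + (b / p) *\<^sub>R B + (c / p) *\<^sub>R C"
    "excenter B C A = (a / q) *\<^sub>R A + (-b / q) *\<^sub>R B + (c / q) *\<^sub>R C"
    "excenter C A B = (a / r) *\<^sub>R A + (b / r) *\<^sub>R B + (-c / r) *\<^sub>R C"
    using excenter_barycentric[of A B C] excenter_barycentric[of B C A] excenter_barycentric[of C A B]
    by (simp_all add: sides p_def q_def r_def a_def b_def c_def algebra_simps)
  moreover have "-a / p + b / p + c / p = 1" "a / q + -b / q + c / q = 1" "a / r + b / r + -c / r = 1"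
    using nz by (simp_all add: field_simps) (simp_all add: p_def q_def r_def algebra_simps)
  ultimately have "cross2 (excenter B C A - excenter A B C) (excenter C A B - excenter A B C)
    = (-a / p * (-b / q * (-c / r) - b / r * (c / q)) - b / p * (a / q * (-c / r) - a / r * (c / q))
       + c / p * (a / q * (b / r) - a / r * (-b / q))) * cross2 (B - A) (C - A)"
    by (simp only: cross2_barycentric)
  also have "\<dots> = 4 * a * b * c / (p * q * r) * cross2 (B - A) (C - A)"
    using nz by (simp add: field_simps)
  finally show ?thesis
    by (simp add: p_def q_def r_def)
qed

lemma extouch_pt_eq:
  fixes A B C :: pt
  assumes "\<not> collinear {A, B, C}"
  defines "a \<equiv> dist B C" and "b \<equiv> dist A C" and "c \<equiv> dist A B"
  shows "extouch_pt A B C = B + ((a + b - c) / (2 * a)) *\<^sub>R (C - B)"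
proof -
  define p where "p = -a + b + c"
  have "p \<noteq> 0"
    using noncollinear_excess_product_pos[OF assms(1)] unfolding p_def a_def b_def c_def by auto
  have "a \<noteq> 0"
    using noncollinear_sides_pos[OF assms(1)] by (simp add: a_def)
  have norm_BC: "(norm (C - B))^2 = a^2"
    by (simp add: a_def dist_norm norm_minus_commute)
  then have BC: "(C - B) \<bullet> (C - B) = a^2"
    by (simp add: power2_norm_eq_inner)
  have AB_BC: "(A - B) \<bullet> (C - B) = (c^2 + a^2 - b^2) / 2"
    using dot_norm_neg[of "A - B" "C - B"] by (simp add: a_def b_def c_def dist_norm norm_minus_commute)
  have "p *\<^sub>R excenter A B C = - (a *\<^sub>R A) + b *\<^sub>R B + c *\<^sub>R C"
    using \<open>p \<noteq> 0\<close> by (simp add: excenter_def p_def a_def b_def c_def)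
  then have "p *\<^sub>R (excenter A B C - B) = c *\<^sub>R (C - B) - a *\<^sub>R (A - B)"
    by (simp add: p_def scaleR_diff_right algebra_simps)
  then have "p * ((excenter A B C - B) \<bullet> (C - B)) = (c *\<^sub>R (C - B) - a *\<^sub>R (A - B)) \<bullet> (C - B)"
    by (metis inner_scaleR_left)
  also have "\<dots> = c * a^2 - a * (c^2 + a^2 - b^2) / 2"
    by (simp only: inner_diff_left[of "c *\<^sub>R (C - B)"] inner_scaleR_left BC AB_BC)
  also have "\<dots> = p * (a * (a + b - c) / 2)"
    by (simp add: p_def field_simps power2_eq_square)
  finally have "(excenter A B C - B) \<bullet> (C - B) = a * (a + b - c) / 2"
    using \<open>p \<noteq> 0\<close> by simp
  then have "(excenter A B C - B) \<bullet> (C - B) / (norm (C - B))^2 = (a + b - c) / (2 * a)"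
    unfolding norm_BC using \<open>a \<noteq> 0\<close> by (simp add: power2_eq_square field_simps)
  then show ?thesis
    by (simp add: extouch_pt_def foot_def)
qed

lemma cross2_extouch:
  fixes A B C :: pt
  assumes "\<not> collinear {A, B, C}"
  defines "a \<equiv> dist B C" and "b \<equiv> dist A C" and "c \<equiv> dist A B"
  shows "cross2 (extouch_pt B C A - extouch_pt A B C) (extouch_pt C A B - extouch_pt A B C)
    = (-a + b + c) * (a - b + c) * (a + b - c) / (4 * a * b * c) * cross2 (B - A) (C - A)"
proof -
  have "\<not> collinear {B, C, A}" "\<not> collinear {C, A, B}"
    using assms(1) by (simp_all add: insert_commute)
  have sides: "dist C A = b" "dist B A = c" "dist C B = a" "dist A C = b" "dist A B = c" "dist B C = a"
    by (simp_all add: a_def b_def c_def dist_commute)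
  have pos: "a > 0" "b > 0" "c > 0"
    using noncollinear_sides_pos[OF assms(1)] by (simp_all add: a_def b_def c_def)
  define t1 t2 t3 where "t1 = (a + b - c) / (2 * a)" and "t2 = (b + c - a) / (2 * b)"
    and "t3 = (c + a - b) / (2 * c)"
  have "extouch_pt A B C = 0 *\<^sub>R A + (1 - t1) *\<^sub>R B + t1 *\<^sub>R C"
    using extouch_pt_eq[OF assms(1)] by (simp add: t1_def a_def b_def c_def algebra_simps)
  moreover have "extouch_pt B C A = t2 *\<^sub>R A + 0 *\<^sub>R B + (1 - t2) *\<^sub>R C"
    using extouch_pt_eq[OF \<open>\<not> collinear {B, C, A}\<close>] by (simp add: t2_def sides algebra_simps)
  moreover have "extouch_pt C A B = (1 - t3) *\<^sub>R A + t3 *\<^sub>R B + 0 *\<^sub>R C"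
    using extouch_pt_eq[OF \<open>\<not> collinear {C, A, B}\<close>] by (simp add: t3_def sides algebra_simps)
  moreover have "0 + (1 - t1) + t1 = 1" "t2 + 0 + (1 - t2) = 1" "(1 - t3) + t3 + 0 = 1"
    by simp_all
  ultimately have "cross2 (extouch_pt B C A - extouch_pt A B C) (extouch_pt C A B - extouch_pt A B C)
    = (0 * (0 * 0 - t3 * (1 - t2)) - (1 - t1) * (t2 * 0 - (1 - t3) * (1 - t2))
       + t1 * (t2 * t3 - (1 - t3) * 0)) * cross2 (B - A) (C - A)"
    by (simp only: cross2_barycentric)
  also have "\<dots> = (-a + b + c) * (a - b + c) * (a + b - c) / (4 * a * b * c) * cross2 (B - A) (C - A)"
    using pos by (simp add: t1_def t2_def t3_def field_simps)
  finally show ?thesis .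
qed

lemma equidistant_radius:
  fixes A B C Z :: pt
  assumes "cross2 (B - A) (C - A) \<noteq> 0" and "dist Z A = R" "dist Z B = R" "dist Z C = R"
  shows "R = dist B C * dist A C * dist A B / (2 * \<bar>cross2 (B - A) (C - A)\<bar>)"
proof -
  have "R^2 = (fst Z - fst A)^2 + (snd Z - snd A)^2"
    "R^2 = (fst Z - fst B)^2 + (snd Z - snd B)^2"
    "R^2 = (fst Z - fst C)^2 + (snd Z - snd C)^2"
    using assms(2-4) dist_power2 by metis+
  then have "R^2 * (4 * (cross2 (B - A) (C - A))^2) = (dist B C)^2 * (dist A C)^2 * (dist A B)^2"
    using assms(1) unfolding dist_power2 cross2_def by simp algebra
  then have "(2 * \<bar>cross2 (B - A) (C - A)\<bar> * R)^2 = (dist B C * dist A C * dist A B)^2"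
    by (simp add: power_mult_distrib ac_simps)
  then have "2 * \<bar>cross2 (B - A) (C - A)\<bar> * R = dist B C * dist A C * dist A B"
    by (rule power2_eq_imp_eq) (use assms(2) in auto)
  then show ?thesis
    using assms(1) by (simp add: field_simps)
qed

lemma circumcenter_exists:
  fixes A B C :: pt
  assumes "cross2 (B - A) (C - A) \<noteq> 0"
  obtains Z where "dist Z B = dist Z A" and "dist Z C = dist Z A"
proof -
  define u1 u2 v1 v2 where "u1 = fst B - fst A" and "u2 = snd B - snd A"
    and "v1 = fst C - fst A" and "v2 = snd C - snd A"
  define i where "i = 1 / (2 * (u1 * v2 - u2 * v1))"
  have i: "i * (2 * (u1 * v2 - u2 * v1)) = 1"
    using assms by (simp add: i_def u1_def u2_def v1_def v2_def cross2_def)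
  define Z where "Z = (fst A + i * (v2 * (u1^2 + u2^2) - u2 * (v1^2 + v2^2)),
                       snd A + i * (u1 * (v1^2 + v2^2) - v1 * (u1^2 + u2^2)))"
  have "(dist Z B)^2 = (dist Z A)^2" "(dist Z C)^2 = (dist Z A)^2"
    using i unfolding dist_power2 Z_def u1_def u2_def v1_def v2_def by simp_all algebra+
  then show ?thesis
    using that by (simp add: power2_eq_iff_nonneg)
qed

lemma circumradius_eq:
  fixes A B C :: pt
  assumes "\<not> collinear {A, B, C}"
  shows "circumradius A B C = dist B C * dist A C * dist A B / (2 * \<bar>cross2 (B - A) (C - A)\<bar>)"
proof -
  have cr: "cross2 (B - A) (C - A) \<noteq> 0"
    using assms collinear_if_cross2_eq_0 by blast
  obtain Z where Z: "dist Z B = dist Z A" "dist Z C = dist Z A"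
    using circumcenter_exists[OF cr] .
  show ?thesis
    unfolding circumradius_def
  proof (rule the_equality)
    show "\<exists>Z. dist Z A = dist B C * dist A C * dist A B / (2 * \<bar>cross2 (B - A) (C - A)\<bar>)
            \<and> dist Z B = dist B C * dist A C * dist A B / (2 * \<bar>cross2 (B - A) (C - A)\<bar>)
            \<and> dist Z C = dist B C * dist A C * dist A B / (2 * \<bar>cross2 (B - A) (C - A)\<bar>)"
      using Z equidistant_radius[OF cr refl Z] by metis
  qed (use equidistant_radius[OF cr] in blast)
qed

lemma infdist_line_eq_dist_foot:
  fixes B C X :: pt
  assumes "B \<noteq> C"
  shows "infdist X (affine hull {B, C}) = dist X (foot X B C)"
proof -
  define t where "t = ((X - B) \<bullet> (C - B)) / (norm (C - B))^2"
  have F: "foot X B C = B + t *\<^sub>R (C - B)"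
    by (simp add: foot_def t_def)
  have t: "t * ((fst B - fst C)^2 + (snd B - snd C)^2)
      = (fst X - fst B) * (fst C - fst B) + (snd X - snd B) * (snd C - snd B)"
    using assms unfolding t_def dist_power2[symmetric] dist_norm[symmetric]
    by (simp add: dist_commute inner_prod_def)
  have on_line: "foot X B C \<in> affine hull {B, C}"
    unfolding affine_hull_2 F
    by (rule CollectI, rule exI[of _ "1 - t"], rule exI[of _ t]) (simp add: algebra_simps)
  have closest: "dist X (foot X B C) \<le> dist X y" if "y \<in> affine hull {B, C}" for y
  proof -
    obtain u v where y: "y = u *\<^sub>R B + v *\<^sub>R C" "u + v = 1"
      using \<open>y \<in> affine hull {B, C}\<close> unfolding affine_hull_2 by blast
    have "(dist X y)^2 = (dist X (foot X B C))^2 + (dist (foot X B C) y)^2"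
      unfolding dist_power2 F y(1) using t y(2) by simp algebra
    then have "(dist X (foot X B C))^2 \<le> (dist X y)^2"
      by simp
    then show ?thesis
      by (simp add: power2_le_iff_abs_le)
  qed
  show ?thesis
  proof (rule antisym)
    show "infdist X (affine hull {B, C}) \<le> dist X (foot X B C)"
      by (rule infdist_le[OF on_line])
    show "dist X (foot X B C) \<le> infdist X (affine hull {B, C})"
      using on_line by (subst infdist_notempty) (auto intro!: cINF_greatest closest)
  qed
qed

lemma dist_foot:
  fixes B C X :: pt
  assumes "B \<noteq> C"
  shows "dist X (foot X B C) = \<bar>cross2 (C - B) (X - B)\<bar> / dist B C"
proof -
  define t where "t = ((X - B) \<bullet> (C - B)) / (norm (C - B))^2"
  have t: "t * (dist B C)^2 = (fst X - fst B) * (fst C - fst B) + (snd X - snd B) * (snd C - snd B)"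
    using assms unfolding t_def dist_norm[symmetric] by (simp add: dist_commute inner_prod_def)
  have "(dist X (foot X B C) * dist B C)^2 = (cross2 (C - B) (X - B))^2"
    using t unfolding foot_def t_def[symmetric] power_mult_distrib dist_power2[of B C] dist_power2[of X]
    by (simp add: cross2_def) algebra
  then have "(dist X (foot X B C) * dist B C)^2 = \<bar>cross2 (C - B) (X - B)\<bar>^2"
    by simp
  then have "dist X (foot X B C) * dist B C = \<bar>cross2 (C - B) (X - B)\<bar>"
    by (rule power2_eq_imp_eq) auto
  then show ?thesis
    using assms by (simp add: field_simps)
qed

lemma inradius_eq:
  fixes A B C :: pt
  assumes "\<not> collinear {A, B, C}"
  shows "inradius A B C = \<bar>cross2 (B - A) (C - A)\<bar> / (dist B C + dist A C + dist A B)"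
proof -
  define a b c s where "a = dist B C" and "b = dist A C" and "c = dist A B" and "s = a + b + c"
  have pos: "a > 0" "s > 0"
    using noncollinear_sides_pos[OF assms] unfolding a_def b_def c_def s_def by linarith+
  have incenter: "incenter A B C = (a / s) *\<^sub>R A + (b / s) *\<^sub>R B + (c / s) *\<^sub>R C"
    by (simp add: incenter_def a_def b_def c_def s_def scaleR_add_right)
  have "a / s + b / s + c / s = 1"
    using pos unfolding s_def by (simp flip: add_divide_distrib)
  then have "cross2 (C - B) (incenter A B C - B) = a / s * cross2 (B - A) (C - A)"
    using cross2_barycentric[of 0 1 0 0 0 1 "a / s" "b / s" "c / s" A B C]
    by (simp add: incenter)
  moreover have "B \<noteq> C"
    using pos by (auto simp: a_def)
  ultimately show ?thesis
    using pos unfolding inradius_def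
    by (simp add: infdist_line_eq_dist_foot dist_foot abs_mult flip: a_def b_def c_def s_def)
qed

lemma excentral_area_div_extouch_area:
  fixes A B C :: pt
  assumes "\<not> collinear {A, B, C}"
  defines "a \<equiv> dist B C" and "b \<equiv> dist A C" and "c \<equiv> dist A B"
  shows "excentral_area A B C / extouch_area A B C
    = (4 * a * b * c / ((-a + b + c) * (a - b + c) * (a + b - c)))^2"
proof -
  define N where "N = (-a + b + c) * (a - b + c) * (a + b - c)"
  define k where "k = 4 * a * b * c / N"
  have "a > 0" "b > 0" "c > 0"
    using noncollinear_sides_pos[OF assms(1)] by (simp_all add: a_def b_def c_def)
  moreover have "N > 0"
    using noncollinear_excess_product_pos[OF assms(1)] by (simp add: N_def a_def b_def c_def)
  ultimately have "k \<noteq> 0" "N / (4 * a * b * c) = 1 / k"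
    by (simp_all add: k_def)
  moreover have "cross2 (B - A) (C - A) \<noteq> 0"
    using assms(1) collinear_if_cross2_eq_0 by blast
  ultimately show ?thesis
    unfolding excentral_area_def extouch_area_def tri_area_def
      cross2_excentral[OF assms(1)] cross2_extouch[OF assms(1)]
      a_def[symmetric] b_def[symmetric] c_def[symmetric] N_def[symmetric] k_def[symmetric]
    by (simp add: abs_mult power2_eq_square)
qed

lemma inradius_div_circumradius:
  fixes A B C :: pt
  assumes "\<not> collinear {A, B, C}"
  defines "a \<equiv> dist B C" and "b \<equiv> dist A C" and "c \<equiv> dist A B"
  shows "inradius A B C / circumradius A B C = (-a + b + c) * (a - b + c) * (a + b - c) / (2 * a * b * c)"
proof -
  define q s where "q = \<bar>cross2 (B - A) (C - A)\<bar>" and "s = a + b + c"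
  have "cross2 (B - A) (C - A) \<noteq> 0"
    using assms(1) collinear_if_cross2_eq_0 by blast
  then have "q > 0"
    by (simp add: q_def)
  have "a > 0" "b > 0" "c > 0"
    unfolding a_def b_def c_def by (rule noncollinear_sides_pos[OF assms(1)])+
  then have "s > 0"
    by (simp add: s_def)
  have heron: "4 * q^2 = s * ((-a + b + c) * (a - b + c) * (a + b - c))"
    using heron_cross2[where A=A and B=B and C=C] by (simp add: q_def s_def a_def b_def c_def)
  have "inradius A B C / circumradius A B C = (q / s) / (a * b * c / (2 * q))"
    unfolding inradius_eq[OF assms(1)] circumradius_eq[OF assms(1)]
    by (simp add: a_def b_def c_def q_def s_def)
  also have "\<dots> = (-a + b + c) * (a - b + c) * (a + b - c) / (2 * a * b * c)"
    using \<open>a > 0\<close> \<open>b > 0\<close> \<open>c > 0\<close> \<open>q > 0\<close> \<open>s > 0\<close> heron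
    by (simp add: field_simps power2_eq_square)
  finally show ?thesis .
qed

lemma excentral_area_div_extouch_area_eq_radius_ratio:
  fixes A B C :: pt
  assumes "\<not> collinear {A, B, C}"
  shows "excentral_area A B C / extouch_area A B C = (2 * circumradius A B C / inradius A B C)^2"
proof -
  have "2 * circumradius A B C / inradius A B C = 2 / (inradius A B C / circumradius A B C)"
    by simp
  then show ?thesis
    by (simp add: excentral_area_div_extouch_area[OF assms] inradius_div_circumradius[OF assms]
        mult.assoc)
qed

(* For P on the ellipse, tangent_gap a b P vanishes exactly on the tangent line at P, and
   tangent_gap a b P Q is the signed distance of Q from that line times norm (ellipse_normal a b P). *)
definition tangent_gap :: "real \<Rightarrow> real \<Rightarrow> pt \<Rightarrow> pt \<Rightarrow> real" where
  "tangent_gap a b P Q = 1 - fst P * fst Q / a^2 - snd P * snd Q / b^2"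

lemma tangent_gap_commute: "tangent_gap a b P Q = tangent_gap a b Q P"
  by (simp add: tangent_gap_def mult.commute)

lemma inner_ellipse_normal:
  assumes "on_ellipse a b P"
  shows "ellipse_normal a b P \<bullet> (Q - P) = - tangent_gap a b P Q"
proof -
  have "ellipse_normal a b P \<bullet> (Q - P)
      = (fst P * fst Q / a^2 + snd P * snd Q / b^2) - ((fst P)^2 / a^2 + (snd P)^2 / b^2)"
    by (simp add: ellipse_normal_def inner_prod_def power2_eq_square algebra_simps diff_divide_distrib)
  then show ?thesis
    using assms by (simp add: on_ellipse_def tangent_gap_def)
qed

lemma tangent_gap_pos:
  assumes "a > 0" "b > 0" "on_ellipse a b P" "on_ellipse a b Q" "P \<noteq> Q"
  shows "tangent_gap a b P Q > 0"
proof -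
  have "2 * tangent_gap a b P Q = (fst P / a - fst Q / a)^2 + (snd P / b - snd Q / b)^2"
    using assms(1-4) by (simp add: on_ellipse_def tangent_gap_def power2_eq_square field_simps)
  moreover have "fst P / a \<noteq> fst Q / a \<or> snd P / b \<noteq> snd Q / b"
    using assms(1,2,5) by (auto simp: prod_eq_iff)
  ultimately show ?thesis
    by (smt (verit) sum_power2_gt_zero_iff)
qed

lemma cross2_bisector_inner_eq:
  fixes n u w :: pt
  assumes "cross2 n ((1 / norm u) *\<^sub>R u + (1 / norm w) *\<^sub>R w) = 0"
    and "cross2 u w \<noteq> 0" and "n \<noteq> 0"
  shows "(n \<bullet> u) * norm w = (n \<bullet> w) * norm u"
proof -
  have "u \<noteq> 0" "w \<noteq> 0"
    using assms(2) by (auto simp: cross2_def)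
  define iu iw where "iu = 1 / norm u" and "iw = 1 / norm w"
  have "iu * norm u = 1" "iw * norm w = 1"
    using \<open>u \<noteq> 0\<close> \<open>w \<noteq> 0\<close> by (simp_all add: iu_def iw_def)
  moreover have "(norm u)^2 = (fst u)^2 + (snd u)^2" "(norm w)^2 = (fst w)^2 + (snd w)^2"
    using dist_power2[of u 0] dist_power2[of w 0] by simp_all
  moreover have "(fst n)^2 + (snd n)^2 \<noteq> 0"
    using assms(3) by (simp add: prod_eq_iff sum_power2_eq_zero_iff)
  ultimately show ?thesis
    using assms(1,2) unfolding iu_def[symmetric] iw_def[symmetric]
    by (simp add: cross2_def inner_prod_def) algebra
qed

(* Reflection law: PQ and PR make equal angles with the tangent at P, so the distances of Q and R
   from the tangent are proportional to |PQ| and |PR|. *)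
lemma normal_bisects_tangent_gap:
  assumes "a > 0" "b > 0" "on_ellipse a b P" "normal_bisects a b P Q R" "\<not> collinear {P, Q, R}"
  shows "tangent_gap a b P Q * dist P R = tangent_gap a b P R * dist P Q"
proof -
  have "P \<noteq> 0"
    using assms(3) by (auto simp: on_ellipse_def)
  then have "ellipse_normal a b P \<noteq> 0"
    using assms(1,2) by (auto simp: ellipse_normal_def prod_eq_iff)
  moreover have "cross2 (Q - P) (R - P) \<noteq> 0"
    using assms(5) collinear_if_cross2_eq_0 by blast
  moreover have "cross2 (ellipse_normal a b P)
      ((1 / norm (Q - P)) *\<^sub>R (Q - P) + (1 / norm (R - P)) *\<^sub>R (R - P)) = 0"
    using assms(4) by (simp add: normal_bisects_def int_bisector_dir_def dist_norm)
  ultimately have "(ellipse_normal a b P \<bullet> (Q - P)) * norm (R - P)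
      = (ellipse_normal a b P \<bullet> (R - P)) * norm (Q - P)"
    using cross2_bisector_inner_eq by blast
  then show ?thesis
    by (simp add: inner_ellipse_normal[OF assms(3)] dist_norm norm_minus_commute)
qed

lemma billiard3_tangent_gap_proportional:
  assumes "a > 0" "b > 0" "billiard3 a b P1 P2 P3"
  obtains J where "J > 0" "tangent_gap a b P2 P3 = J * dist P2 P3"
    "tangent_gap a b P3 P1 = J * dist P3 P1" "tangent_gap a b P1 P2 = J * dist P1 P2"
proof
  have nc: "\<not> collinear {P1, P2, P3}" "\<not> collinear {P2, P3, P1}"
    and E: "on_ellipse a b P1" "on_ellipse a b P2"
    and bisects: "normal_bisects a b P1 P2 P3" "normal_bisects a b P2 P3 P1"
    using assms(3) by (auto simp: billiard3_def insert_commute)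
  have "P1 \<noteq> P2"
    using nc(1) by auto
  then have "dist P1 P2 > 0" "tangent_gap a b P1 P2 > 0"
    using tangent_gap_pos[OF assms(1,2) E] by auto
  define J where "J = tangent_gap a b P1 P2 / dist P1 P2"
  show "J > 0" "tangent_gap a b P1 P2 = J * dist P1 P2"
    using \<open>dist P1 P2 > 0\<close> \<open>tangent_gap a b P1 P2 > 0\<close> by (simp_all add: J_def)
  show "tangent_gap a b P3 P1 = J * dist P3 P1"
    using normal_bisects_tangent_gap[OF assms(1,2) E(1) bisects(1) nc(1)] \<open>dist P1 P2 > 0\<close>
    by (simp add: J_def tangent_gap_commute dist_commute field_simps)
  show "tangent_gap a b P2 P3 = J * dist P2 P3"
    using normal_bisects_tangent_gap[OF assms(1,2) E(2) bisects(2) nc(2)] \<open>dist P1 P2 > 0\<close>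
    by (simp add: J_def tangent_gap_commute dist_commute field_simps)
qed

lemma unit_circle_chord_relation:
  fixes X1 Y1 X2 Y2 a b \<mu> :: real
  assumes "X1^2 + Y1^2 = 1" "X2^2 + Y2^2 = 1" "1 - X1 * X2 - Y1 * Y2 \<noteq> 0"
    and "(1 - X1 * X2 - Y1 * Y2)^2 = \<mu> * (a^2 * (X1 - X2)^2 + b^2 * (Y1 - Y2)^2)"
  shows "(1 - \<mu> * (a^2 - b^2)) * X1 * X2 + (1 + \<mu> * (a^2 - b^2)) * Y1 * Y2 = 1 - \<mu> * (a^2 + b^2)"
  using assms by algebra

lemma unit_circle_triangle_closure:
  fixes X1 Y1 X2 Y2 X3 Y3 k \<alpha> :: real
  assumes "X1^2 + Y1^2 = 1" "X2^2 + Y2^2 = 1" "X3^2 + Y3^2 = 1"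
    and "(1 - k) * X1 * X2 + (1 + k) * Y1 * Y2 = \<alpha>"
      "(1 - k) * X2 * X3 + (1 + k) * Y2 * Y3 = \<alpha>"
      "(1 - k) * X3 * X1 + (1 + k) * Y3 * Y1 = \<alpha>"
    and "1 - X1 * X2 - Y1 * Y2 \<noteq> 0" "1 - X2 * X3 - Y2 * Y3 \<noteq> 0" "1 - X3 * X1 - Y3 * Y1 \<noteq> 0"
    and "k \<ge> 0" "k + \<alpha> < 1" \<comment> \<open>only used to exclude k (X1^2 - Y1^2) + \<alpha> = 1\<close>
  shows "k^2 = 1 + 2 * \<alpha>"
proof -
  have "X1^2 - Y1^2 \<le> 1"
    using assms(1) by (smt (verit) zero_le_power2)
  then have "k * (X1^2 - Y1^2) \<le> k"
    using \<open>k \<ge> 0\<close> by (metis mult_left_mono mult.right_neutral)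
  then have "k * (X1^2 - Y1^2) + \<alpha> - 1 \<noteq> 0"
    using \<open>k + \<alpha> < 1\<close> by linarith
  with assms(1-9) show ?thesis
    by algebra
qed

lemma unit_circle_triangle_gap_product:
  fixes X1 Y1 X2 Y2 X3 Y3 k \<alpha> :: real
  defines "G1 \<equiv> 1 - X2 * X3 - Y2 * Y3" and "G2 \<equiv> 1 - X3 * X1 - Y3 * Y1"
    and "G3 \<equiv> 1 - X1 * X2 - Y1 * Y2"
  assumes "X1^2 + Y1^2 = 1" "X2^2 + Y2^2 = 1" "X3^2 + Y3^2 = 1"
    and "(1 - k) * X1 * X2 + (1 + k) * Y1 * Y2 = \<alpha>"
      "(1 - k) * X2 * X3 + (1 + k) * Y2 * Y3 = \<alpha>"
      "(1 - k) * X3 * X1 + (1 + k) * Y3 * Y1 = \<alpha>"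
    and "G1 \<noteq> 0" "G2 \<noteq> 0" "G3 \<noteq> 0"
    and "k^2 = 1 + 2 * \<alpha>"
  shows "(-G1 + G2 + G3) * (G1 - G2 + G3) * (G1 + G2 - G3) = -2 * \<alpha> * G1 * G2 * G3"
  using assms unfolding G1_def G2_def G3_def by algebra

lemma unit_circle_triangle_excess_product:
  fixes X1 Y1 X2 Y2 X3 Y3 a b J d1 d2 d3 :: real
  assumes "a > b" "b > 0" "J > 0" "d1 > 0" "d2 > 0" "d3 > 0"
    and unit: "X1^2 + Y1^2 = 1" "X2^2 + Y2^2 = 1" "X3^2 + Y3^2 = 1"
    and G: "1 - X2 * X3 - Y2 * Y3 = J * d1" "1 - X3 * X1 - Y3 * Y1 = J * d2"
      "1 - X1 * X2 - Y1 * Y2 = J * d3"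
    and d: "d1^2 = a^2 * (X2 - X3)^2 + b^2 * (Y2 - Y3)^2"
      "d2^2 = a^2 * (X3 - X1)^2 + b^2 * (Y3 - Y1)^2"
      "d3^2 = a^2 * (X1 - X2)^2 + b^2 * (Y1 - Y2)^2"
  shows "(J^2 * (a^2 - b^2))^2 = 1 + 2 * (1 - J^2 * (a^2 + b^2))"
    and "(-d1 + d2 + d3) * (d1 - d2 + d3) * (d1 + d2 - d3) = 2 * (J^2 * (a^2 + b^2) - 1) * d1 * d2 * d3"
proof -
  have G_nz: "1 - X2 * X3 - Y2 * Y3 \<noteq> 0" "1 - X3 * X1 - Y3 * Y1 \<noteq> 0" "1 - X1 * X2 - Y1 * Y2 \<noteq> 0"
    using assms(3-6) unfolding G by simp_all
  define k \<alpha> where "k = J^2 * (a^2 - b^2)" and "\<alpha> = 1 - J^2 * (a^2 + b^2)"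
  have "(1 - k) * X1 * X2 + (1 + k) * Y1 * Y2 = \<alpha>"
    using unit_circle_chord_relation[OF unit(1,2) G_nz(3)] G(3) d(3)
    by (simp add: k_def \<alpha>_def power_mult_distrib)
  moreover have "(1 - k) * X2 * X3 + (1 + k) * Y2 * Y3 = \<alpha>"
    using unit_circle_chord_relation[OF unit(2,3) G_nz(1)] G(1) d(1)
    by (simp add: k_def \<alpha>_def power_mult_distrib)
  moreover have "(1 - k) * X3 * X1 + (1 + k) * Y3 * Y1 = \<alpha>"
    using unit_circle_chord_relation[OF unit(3,1) G_nz(2)] G(2) d(2)
    by (simp add: k_def \<alpha>_def power_mult_distrib)
  moreover have "k \<ge> 0" "k + \<alpha> < 1"
    using assms(1-3) by (simp_all add: k_def \<alpha>_def algebra_simps)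
  ultimately have closure: "k^2 = 1 + 2 * \<alpha>"
    and "(-(J * d1) + J * d2 + J * d3) * (J * d1 - J * d2 + J * d3) * (J * d1 + J * d2 - J * d3)
      = -2 * \<alpha> * (J * d1) * (J * d2) * (J * d3)"
    using unit_circle_triangle_closure[OF unit _ _ _ G_nz(3,1,2)]
      unit_circle_triangle_gap_product[OF unit _ _ _ G_nz] unfolding G by blast+
  then have "J^3 * ((-d1 + d2 + d3) * (d1 - d2 + d3) * (d1 + d2 - d3))
      = J^3 * (-2 * \<alpha> * d1 * d2 * d3)"
    by (simp add: algebra_simps power3_eq_cube)
  with closure \<open>J > 0\<close> show "(J^2 * (a^2 - b^2))^2 = 1 + 2 * (1 - J^2 * (a^2 + b^2))"
    and "(-d1 + d2 + d3) * (d1 - d2 + d3) * (d1 + d2 - d3) = 2 * (J^2 * (a^2 + b^2) - 1) * d1 * d2 * d3"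
    by (simp_all add: k_def \<alpha>_def)
qed

lemma billiard3_excess_product:
  assumes "a > b" "b > 0" "billiard3 a b P1 P2 P3"
  defines "d1 \<equiv> dist P2 P3" and "d2 \<equiv> dist P1 P3" and "d3 \<equiv> dist P1 P2"
  obtains \<mu> where "\<mu> > 0" "(\<mu> * (a^2 - b^2))^2 = 1 + 2 * (1 - \<mu> * (a^2 + b^2))"
    "(-d1 + d2 + d3) * (d1 - d2 + d3) * (d1 + d2 - d3) = 2 * (\<mu> * (a^2 + b^2) - 1) * d1 * d2 * d3"
proof -
  have "a > 0"
    using assms(1,2) by linarith
  obtain J where "J > 0" and gap: "tangent_gap a b P2 P3 = J * d1"
    "tangent_gap a b P3 P1 = J * d2" "tangent_gap a b P1 P2 = J * d3"
    using billiard3_tangent_gap_proportional[OF \<open>a > 0\<close> assms(2,3)]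
    unfolding d1_def d2_def d3_def by (metis dist_commute)
  have "\<not> collinear {P1, P2, P3}"
    using assms(3) by (simp add: billiard3_def)
  then have "d1 > 0" "d2 > 0" "d3 > 0"
    unfolding d1_def d2_def d3_def by (rule noncollinear_sides_pos)+
  define X1 X2 X3 Y1 Y2 Y3 where "X1 = fst P1 / a" and "X2 = fst P2 / a" and "X3 = fst P3 / a"
    and "Y1 = snd P1 / b" and "Y2 = snd P2 / b" and "Y3 = snd P3 / b"
  have "on_ellipse a b P1" "on_ellipse a b P2" "on_ellipse a b P3"
    using assms(3) by (simp_all add: billiard3_def)
  then have "X1^2 + Y1^2 = 1" "X2^2 + Y2^2 = 1" "X3^2 + Y3^2 = 1"
    by (simp_all add: on_ellipse_def X1_def X2_def X3_def Y1_def Y2_def Y3_def power_divide)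
  moreover have "1 - X2 * X3 - Y2 * Y3 = J * d1" "1 - X3 * X1 - Y3 * Y1 = J * d2"
    "1 - X1 * X2 - Y1 * Y2 = J * d3"
    using gap by (simp_all add: tangent_gap_def X1_def X2_def X3_def Y1_def Y2_def Y3_def power2_eq_square)
  moreover have "d1^2 = a^2 * (X2 - X3)^2 + b^2 * (Y2 - Y3)^2"
    "d2^2 = a^2 * (X3 - X1)^2 + b^2 * (Y3 - Y1)^2" "d3^2 = a^2 * (X1 - X2)^2 + b^2 * (Y1 - Y2)^2"
    using \<open>a > 0\<close> assms(2) unfolding d1_def d2_def d3_def dist_power2
    by (simp_all add: X1_def X2_def X3_def Y1_def Y2_def Y3_def power2_eq_square field_simps)
  ultimately show ?thesis
    using that[of "J^2"] unit_circle_triangle_excess_product[OF assms(1,2) \<open>J > 0\<close> \<open>d1 > 0\<close>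
        \<open>d2 > 0\<close> \<open>d3 > 0\<close>] \<open>J > 0\<close>
    by simp
qed

lemma billiard_parameter_eq:
  fixes a b \<mu> :: real
  assumes "a > b" "b > 0" "\<mu> > 0" "(\<mu> * (a^2 - b^2))^2 = 1 + 2 * (1 - \<mu> * (a^2 + b^2))"
  defines "\<delta> \<equiv> sqrt (a^4 - a^2 * b^2 + b^4)"
  shows "\<mu> * (a^2 + b^2) - 1 = 2 * (\<delta> - b^2) * (a^2 - \<delta>) / (a^2 - b^2)^2"
proof -
  have "a^2 - b^2 > 0"
    using assms(1,2) by (simp add: power_strict_mono)
  have "(a^2 - b^2)^2 * \<mu> + (a^2 + b^2) > 0"
    using assms(2,3) \<open>a^2 - b^2 > 0\<close> by (intro add_pos_pos mult_pos_pos) auto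
  moreover have "((a^2 - b^2)^2 * \<mu> + (a^2 + b^2))^2 = 4 * (a^4 - a^2 * b^2 + b^4)"
    using assms(4) by algebra
  ultimately have "(a^2 - b^2)^2 * \<mu> + (a^2 + b^2) = sqrt (4 * (a^4 - a^2 * b^2 + b^4))"
    by (metis less_imp_le real_sqrt_unique)
  also have "\<dots> = 2 * \<delta>"
    unfolding \<delta>_def real_sqrt_mult by simp
  finally have "(a^2 - b^2)^2 * \<mu> + (a^2 + b^2) = 2 * \<delta>" .
  moreover have "a^4 - a^2 * b^2 + b^4 = (a^2 - b^2)^2 + (a * b)^2"
    by (simp add: power2_eq_square power4_eq_xxxx algebra_simps)
  then have "\<delta>^2 = a^4 - a^2 * b^2 + b^4"
    unfolding \<delta>_def by (metis add_nonneg_nonneg zero_le_power2 real_sqrt_pow2)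
  ultimately show ?thesis
    using \<open>a^2 - b^2 > 0\<close> by (simp add: field_simps) algebra
qed

lemma billiard3_inradius_div_circumradius:
  assumes "a > b" "b > 0" "billiard3 a b P1 P2 P3"
  defines "\<delta> \<equiv> sqrt (a^4 - a^2 * b^2 + b^4)"
  shows "inradius P1 P2 P3 / circumradius P1 P2 P3 = 2 * (\<delta> - b^2) * (a^2 - \<delta>) / (a^2 - b^2)^2"
proof -
  obtain \<mu> where \<mu>: "\<mu> > 0" "(\<mu> * (a^2 - b^2))^2 = 1 + 2 * (1 - \<mu> * (a^2 + b^2))"
    and excess: "(- dist P2 P3 + dist P1 P3 + dist P1 P2) * (dist P2 P3 - dist P1 P3 + dist P1 P2)
      * (dist P2 P3 + dist P1 P3 - dist P1 P2)
      = 2 * (\<mu> * (a^2 + b^2) - 1) * dist P2 P3 * dist P1 P3 * dist P1 P2"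
    using billiard3_excess_product[OF assms(1-3)] by blast
  have nc: "\<not> collinear {P1, P2, P3}"
    using assms(3) by (simp add: billiard3_def)
  then have "dist P2 P3 > 0" "dist P1 P3 > 0" "dist P1 P2 > 0"
    by (rule noncollinear_sides_pos)+
  then have "inradius P1 P2 P3 / circumradius P1 P2 P3 = \<mu> * (a^2 + b^2) - 1"
    unfolding inradius_div_circumradius[OF nc] excess by simp
  also have "\<dots> = 2 * (\<delta> - b^2) * (a^2 - \<delta>) / (a^2 - b^2)^2"
    unfolding \<delta>_def by (rule billiard_parameter_eq[OF assms(1,2) \<mu>])
  finally show ?thesis .
qed

lemma billiard3_excentral_area_div_extouch_area:
  assumes "a > b" "b > 0" "billiard3 a b P1 P2 P3"
  defines "\<delta> \<equiv> sqrt (a^4 - a^2 * b^2 + b^4)"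
  shows "excentral_area P1 P2 P3 / extouch_area P1 P2 P3 = ((a^2 - b^2)^2 / ((\<delta> - b^2) * (a^2 - \<delta>)))^2"
proof -
  have "\<not> collinear {P1, P2, P3}"
    using assms(3) by (simp add: billiard3_def)
  then have "excentral_area P1 P2 P3 / extouch_area P1 P2 P3
      = (2 / (inradius P1 P2 P3 / circumradius P1 P2 P3))^2"
    by (simp add: excentral_area_div_extouch_area_eq_radius_ratio)
  also have "\<dots> = ((a^2 - b^2)^2 / ((\<delta> - b^2) * (a^2 - \<delta>)))^2"
    unfolding billiard3_inradius_div_circumradius[OF assms(1-3), folded \<delta>_def]
    by (simp only: mult.assoc divide_divide_eq_right) simp
  finally show ?thesis .
qed

theorem theorem2:
  fixes a b :: real
  assumes "a > b" and "b > 0"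
  shows "(\<forall>P1 P2 P3. billiard3 a b P1 P2 P3 \<longrightarrow>
            excentral_area P1 P2 P3 / extouch_area P1 P2 P3
              = (2 * circumradius P1 P2 P3 / inradius P1 P2 P3)^2)
       \<and> (\<forall>P1 P2 P3 Q1 Q2 Q3. billiard3 a b P1 P2 P3 \<and> billiard3 a b Q1 Q2 Q3 \<longrightarrow>
            excentral_area P1 P2 P3 / extouch_area P1 P2 P3
              = excentral_area Q1 Q2 Q3 / extouch_area Q1 Q2 Q3)"
  using excentral_area_div_extouch_area_eq_radius_ratio
    billiard3_excentral_area_div_extouch_area[OF assms]
  by (auto simp: billiard3_def)

end
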